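(* Let $n\ge 4$, let $\beta\in PB_n$ be a Brunnian braid, and let $i,j,k\in\{1,\dots,n\}$ be distinct. Then $\phi_{(i,j,k)}(\phi_n(\beta))=1$ in the group $F$ defined below.
   Context: $PB_n$ is the pure braid group with standard generators $b_{ij}$ ($1\le i<j\le n$); $\beta$ is Brunnian if deleting any single strand (the homomorphism $PB_n\to PB_{n-1}$ sending $b_{ij}\mapsto 1$ if $m\in\{i,j\}$ and relabelling indices $>m$ down by one otherwise) gives the trivial braid, for every strand $m$. $G_n^3$ is the group with generators $a_{ijk}$, one for each $3$-element subset $\{i,j,k\}\subset\{1,\dots,n\}$ (symmetric in the indices), and relations $a_{ijk}^2=1$; $a_{ijk}a_{stu}=a_{stu}a_{ijk}$ if $|\{i,j,k\}\cap\{s,t,u\}|<2$; $a_{ijk}a_{ijl}a_{ikl}a_{jkl}=a_{jkl}a_{ikl}a_{ijl}a_{ijk}$ for distinct $i,j,k,l$. For $1\le i<j\le n$ let $c_{i,j}=a_{i,j,j+1}\cdots a_{i,j,n}\,a_{i,j,1}\cdots a_{i,j,j-1}$ (factor with third index $i$ omitted), and let $\phi_n\colon PB_n\to G_n^3$ be the homomorphism $\phi_n(b_{ij})=c_{i,i+1}^{-1}\cdots c_{i,j-1}^{-1}c_{i,j}^2c_{i,j-1}\cdots c_{i,i+1}$. Fix distinct $i,j,k$. Let $F$ be the group generated by all maps $\sigma\colon\{1,\dots,n\}\setminus\{i,j,k\}\to\mathbb{Z}_2\times\mathbb{Z}_2$ subject only to $\sigma^2=1$ (a free product of $2^{2(n-3)}$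 copies of $\mathbb{Z}_2$). For a word $w$ in the generators of $G_n^3$ and each occurrence $c$ of the letter $a_{ijk}$ in $w$, define $i_c\colon\{1,\dots,n\}\setminus\{i,j,k\}\to\mathbb{Z}_2\times\mathbb{Z}_2$ by $i_c(l)=(N_{jkl}+N_{ijl},\,N_{ikl}+N_{ijl})\bmod 2$, where $N_{stu}$ is the number of occurrences of $a_{stu}$ in $w$ before $c$. If $c_1,\dots,c_m$ are the occurrences of $a_{ijk}$ in $w$ in order, set $\phi_{(i,j,k)}(w)=i_{c_1}i_{c_2}\cdots i_{c_m}\in F$. It is a standing fact from the paper that on the subgroup of even elements of $G_n^3$, which contains $\phi_n(PB_n)$, this value depends only on the group element represented by $w$; thus $\phi_{(i,j,k)}\circ\phi_n\colon PB_n\to F$ is well defined. *)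

theory Defs
  imports Main
begin

text \<open>A braid word: letters (a, True) = sigma_a, (a, False) = sigma_a inverse, 1 <= a <= m-1.\<close>
type_synonym bword = "(nat \<times> bool) list"

inductive braid_step :: "nat \<Rightarrow> bword \<Rightarrow> bword \<Rightarrow> bool" for m :: nat where
  free_red: "\<lbrakk>1 \<le> a; a < m\<rbrakk> \<Longrightarrow>
     braid_step m (xs @ [(a, e), (a, \<not> e)] @ ys) (xs @ ys)"
| far_comm: "\<lbrakk>1 \<le> a; a < m; 1 \<le> b; b < m; a + 2 \<le> b\<rbrakk> \<Longrightarrow>
     braid_step m (xs @ [(a, True), (b, True)] @ ys) (xs @ [(b, True), (a, True)] @ ys)"
| braid_rel: "\<lbrakk>1 \<le> a; a + 1 < m\<rbrakk> \<Longrightarrow>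
     braid_step m (xs @ [(a, True), (a + 1, True), (a, True)] @ ys)
                  (xs @ [(a + 1, True), (a, True), (a + 1, True)] @ ys)"

definition braid_trivial :: "nat \<Rightarrow> bword \<Rightarrow> bool" where
  "braid_trivial m w \<longleftrightarrow> equivclp (braid_step m) w []"

definition binv :: "bword \<Rightarrow> bword" where
  "binv w = rev (map (\<lambda>(a, e). (a, \<not> e)) w)"

definition pb_gen :: "nat \<Rightarrow> nat \<Rightarrow> bword" where
  "pb_gen i j = map (\<lambda>a. (a, True)) (rev [i+1..<j]) @ [(i, True), (i, True)]
                @ map (\<lambda>a. (a, False)) [i+1..<j]"

text \<open>Words in the generators b_ij and their inverses: ((i,j), True) = b_ij, ((i,j), False) = b_ij inverse.\<close>
type_synonym pword = "((nat \<times> nat) \<times> bool) list"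

definition pb_word :: "nat \<Rightarrow> pword \<Rightarrow> bool" where
  "pb_word n w \<longleftrightarrow> (\<forall>((i, j), e) \<in> set w. 1 \<le> i \<and> i < j \<and> j \<le> n)"

definition pb_expand :: "pword \<Rightarrow> bword" where
  "pb_expand w = concat (map (\<lambda>((i, j), e). if e then pb_gen i j else binv (pb_gen i j)) w)"

definition relabel :: "nat \<Rightarrow> nat \<Rightarrow> nat" where
  "relabel m x = (if x > m then x - 1 else x)"

definition delete_strand :: "nat \<Rightarrow> pword \<Rightarrow> pword" where
  "delete_strand m w = concat (map (\<lambda>((i, j), e).
      if m = i \<or> m = j then [] else [((relabel m i, relabel m j), e)]) w)"

definition brunnian :: "nat \<Rightarrow> pword \<Rightarrow> bool" where
  "brunnian n w \<longleftrightarrow> pb_word n w \<and>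
     (\<forall>m \<in> {1..n}. braid_trivial (n - 1) (pb_expand (delete_strand m w)))"

text \<open>Letters of G_n^3 are 3-element subsets; since a^2 = 1, the inverse of a word is its reverse.\<close>
definition c_word :: "nat \<Rightarrow> nat \<Rightarrow> nat \<Rightarrow> nat set list" where
  "c_word n i j = map (\<lambda>l. {i, j, l}) (filter (\<lambda>l. l \<noteq> i) ([j+1..<n+1] @ [1..<j]))"

definition phi_gen :: "nat \<Rightarrow> nat \<Rightarrow> nat \<Rightarrow> nat set list" where
  "phi_gen n i j =
     (let P = concat (map (c_word n i) (rev [i+1..<j]))
      in rev P @ c_word n i j @ c_word n i j @ P)"

definition phi_n :: "nat \<Rightarrow> pword \<Rightarrow> nat set list" where
  "phi_n n w = concat (map (\<lambda>((i, j), e). if e then phi_gen n i j else rev (phi_gen n i j)) w)"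

text \<open>Generators of F: maps from {1..n} - {i,j,k} to Z2 x Z2 (= bool x bool),
  represented extensionally (value (False,False) outside the domain).\<close>
definition i_c :: "nat \<Rightarrow> nat \<Rightarrow> nat \<Rightarrow> nat \<Rightarrow> nat set list \<Rightarrow> (nat \<Rightarrow> bool \<times> bool)" where
  "i_c n i j k pre = (\<lambda>l. if l \<in> {1..n} - {i, j, k} then
      (odd (count_list pre {j, k, l} + count_list pre {i, j, l}),
       odd (count_list pre {i, k, l} + count_list pre {i, j, l}))
    else (False, False))"

definition phi_ijk :: "nat \<Rightarrow> nat \<Rightarrow> nat \<Rightarrow> nat \<Rightarrow> nat set list \<Rightarrow> (nat \<Rightarrow> bool \<times> bool) list" where
  "phi_ijk n i j k g = map (\<lambda>p. i_c n i j k (take p g))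
      (filter (\<lambda>p. g ! p = {i, j, k}) [0..<length g])"

inductive F_step :: "'a list \<Rightarrow> 'a list \<Rightarrow> bool" where
  "F_step (xs @ [s, s] @ ys) (xs @ ys)"

definition F_trivial :: "'a list \<Rightarrow> bool" where
  "F_trivial w \<longleftrightarrow> equivclp F_step w []"

end

theory Submission
  imports Defs "HOL-Combinatorics.Transposition"
begin

text \<open>
  Since i_c is additive and vanishes on every phi_n(b_st), a word of the form
  P^-1 c c P, the map phi_(i,j,k) turns phi_n into a homomorphism PB_n \<rightarrow> F, so it is
  determined by its values on generators. For i < j < k an explicit count gives
  b_ij \<mapsto> u v, b_ik \<mapsto> v z, b_jk \<mapsto> z u and b_st \<mapsto> 1 otherwise, for suitable
  generators u, v, z of F.

  The same values are produced by a valuation of braid words that walks through the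
  crossings and records, with labels v, u, z, each crossing between two of the strands
  i, j, k. It respects the braid relations precisely because only three strands are
  labelled: two commuting crossings can both be recorded only if they involve four
  distinct labelled strands. Hence the homomorphism factors through forgetting any
  strand m \<notin> {i, j, k}, which exists as n \<ge> 4, and a Brunnian braid becomes trivial
  once m is forgotten. Other orders of i, j, k reduce to the sorted one, because
  permuting i, j, k only relabels the generators of F.
\<close>

section \<open>The group \<open>F\<close>\<close>

abbreviation F_eq :: "'a list \<Rightarrow> 'a list \<Rightarrow> bool" where
  "F_eq \<equiv> equivclp F_step"

declare equivclp_trans [trans]

lemma equivclp_compat:
  assumes "\<And>u v. r u v \<Longrightarrow> s (h u) (h v)" and "equivclp r a b"
  shows "equivclp s (h a) (h b)"
  using assms(2)
proof (induction rule: equivclp_induct)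
  case base
  show ?case by simp
next
  case (step y z)
  then have "equivclp s (h y) (h z)"
    using assms(1) by (metis equivclp_sym r_into_equivclp)
  with step.IH show ?case by (rule equivclp_trans)
qed

lemma F_step_append_context: "F_step u v \<Longrightarrow> F_step (p @ u @ q) (p @ v @ q)"
  by (induction rule: F_step.induct) (metis F_step.intros append.assoc)

lemma F_eq_cancel: "F_eq (xs @ [s, s] @ ys) (xs @ ys)"
  by (intro r_into_equivclp F_step.intros)

lemma F_eq_append: "F_eq a b \<Longrightarrow> F_eq c d \<Longrightarrow> F_eq (a @ c) (b @ d)"
  using equivclp_compat[of F_step F_step "\<lambda>x. x @ c" a b]
    equivclp_compat[of F_step F_step "\<lambda>x. b @ x" c d]
    F_step_append_context[of _ _ "[]"] F_step_append_context[where q = "[]"]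
  by (metis append.right_neutral append_Nil equivclp_trans)

lemma F_eq_map: "F_eq a b \<Longrightarrow> F_eq (map f a) (map f b)"
  by (rule equivclp_compat[of F_step F_step "map f"])
    (auto elim!: F_step.cases intro: F_step.intros[of "map f xs" "f s" "map f ys" for xs s ys, simplified])

lemma F_eq_rev: "F_eq a b \<Longrightarrow> F_eq (rev a) (rev b)"
  by (rule equivclp_compat[of F_step F_step rev])
    (auto elim!: F_step.cases intro: F_step.intros[of "rev ys" s "rev xs" for xs s ys, simplified])

lemma F_eq_rev_append_self: "F_eq (rev x @ x) []"
proof (induction x)
  case (Cons a x)
  have "F_eq (rev x @ [a, a] @ x) (rev x @ x)" by (rule F_eq_cancel)
  with Cons.IH show ?case by (simp add: equivclp_trans)
qed simp

lemma F_eq_append_rev_self: "F_eq (x @ rev x) []"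
  using F_eq_rev_append_self[of "rev x"] by simp

section \<open>The map phi_ijk is a crossed homomorphism\<close>

text \<open>With \<open>(\<noteq>)\<close> as addition, bool is Z/2; so \<open>\<oplus>\<close> is the group law of the maps
  into Z/2 \<times> Z/2.\<close>

definition fxor :: "('b \<Rightarrow> bool \<times> bool) \<Rightarrow> ('b \<Rightarrow> bool \<times> bool) \<Rightarrow> 'b \<Rightarrow> bool \<times> bool"
    (infixl "\<oplus>" 65) where
  "f \<oplus> g = (\<lambda>l. (fst (f l) \<noteq> fst (g l), snd (f l) \<noteq> snd (g l)))"

lemma fxor_assoc: "f \<oplus> g \<oplus> h = f \<oplus> (g \<oplus> h)"
  and fxor_cancel_left: "f \<oplus> (f \<oplus> g) = g"
  and fxor_cancel: "(c \<oplus> f) \<oplus> (c \<oplus> g) = f \<oplus> g"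
  by (auto simp: fxor_def fun_eq_iff prod_eq_iff)

lemma fxor_zero [simp]: "(\<lambda>_. (False, False)) \<oplus> f = f" "f \<oplus> (\<lambda>_. (False, False)) = f"
  and fxor_self [simp]: "f \<oplus> f = (\<lambda>_. (False, False))"
  by (simp_all add: fxor_def)

lemma map_fxor_zero [simp]: "map ((\<oplus>) (\<lambda>_. (False, False))) xs = xs"
  by (induction xs) simp_all

lemma i_c_append: "i_c n i j k (a @ b) = i_c n i j k a \<oplus> i_c n i j k b"
  by (auto simp: i_c_def fxor_def)

lemma i_c_rev [simp]: "i_c n i j k (rev g) = i_c n i j k g"
  unfolding i_c_def count_list_rev ..

lemma i_c_Nil [simp]: "i_c n i j k [] = (\<lambda>_. (False, False))"
  by (simp add: i_c_def fun_eq_iff)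

lemma i_c_triple:
  assumes "i \<noteq> j" "i \<noteq> k" "j \<noteq> k"
  shows "i_c n i j k [{i, j, k}] = (\<lambda>_. (False, False))"
  using assms by (auto simp: i_c_def fun_eq_iff insert_eq_iff doubleton_eq_iff insert_commute)

lemma phi_ijk_append:
  "phi_ijk n i j k (a @ b) = phi_ijk n i j k a @ map ((\<oplus>) (i_c n i j k a)) (phi_ijk n i j k b)"
proof -
  let ?T = "{i, j, k}"
  have upt: "[0..<length (a @ b)] = [0..<length a] @ map (\<lambda>q. q + length a) [0..<length b]"
    using upt_add_eq_append[of 0 "length a" "length b"] by (simp add: map_add_upt add.commute)
  have left: "map (\<lambda>p. i_c n i j k (take p (a @ b))) (filter (\<lambda>p. (a @ b) ! p = ?T) [0..<length a])
      = phi_ijk n i j k a"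
    unfolding phi_ijk_def by (intro map_cong filter_cong refl) (auto simp: nth_append)
  have right: "map (\<lambda>p. i_c n i j k (take p (a @ b)))
      (filter (\<lambda>p. (a @ b) ! p = ?T) (map (\<lambda>q. q + length a) [0..<length b]))
      = map ((\<oplus>) (i_c n i j k a)) (phi_ijk n i j k b)"
    by (simp add: phi_ijk_def filter_map comp_def i_c_append nth_append)
  show ?thesis
    unfolding phi_ijk_def[of n i j k "a @ b"] upt filter_append map_append left right ..
qed

lemma phi_ijk_Nil [simp]: "phi_ijk n i j k [] = []"
  by (simp add: phi_ijk_def)

lemma phi_ijk_singleton:
  "phi_ijk n i j k [x] = (if x = {i, j, k} then [i_c n i j k []] else [])"
  by (simp add: phi_ijk_def)

lemma phi_ijk_Cons:
  "phi_ijk n i j k (x # g) = phi_ijk n i j k [x] @ map ((\<oplus>) (i_c n i j k [x])) (phi_ijk n i j k g)"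
  using phi_ijk_append[of n i j k "[x]" g] by simp

lemma phi_ijk_eq_Nil: "{i, j, k} \<notin> set g \<Longrightarrow> phi_ijk n i j k g = []"
  by (auto simp: phi_ijk_def filter_empty_conv in_set_conv_nth)

lemma phi_ijk_rev:
  assumes "i \<noteq> j" "i \<noteq> k" "j \<noteq> k"
  shows "phi_ijk n i j k (rev g) = rev (map ((\<oplus>) (i_c n i j k g)) (phi_ijk n i j k g))"
proof (induction g)
  case (Cons x g)
  have i_c_Cons: "i_c n i j k (x # g) = i_c n i j k [x] \<oplus> i_c n i j k g"
    using i_c_append[of n i j k "[x]" g] by simp
  show ?case
  proof (cases "x = {i, j, k}")
    case True
    then show ?thesis
      unfolding phi_ijk_Cons[of n i j k x g] i_c_Cons using Cons.IH i_c_triple[OF assms, of n]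
      by (simp add: phi_ijk_append phi_ijk_singleton comp_def)
  next
    case False
    then show ?thesis
      unfolding phi_ijk_Cons[of n i j k x g] i_c_Cons using Cons.IH
      by (simp add: phi_ijk_append phi_ijk_singleton fxor_cancel comp_def)
  qed
qed simp

section \<open>The values of phi_ijk on the generators phi_n(b_st)\<close>

definition restrict0 :: "'b set \<Rightarrow> ('b \<Rightarrow> bool \<times> bool) \<Rightarrow> 'b \<Rightarrow> bool \<times> bool" where
  "restrict0 A f = (\<lambda>l. if l \<in> A then f l else (False, False))"

lemma restrict0_fxor: "restrict0 A f \<oplus> restrict0 A g = restrict0 A (f \<oplus> g)"
  by (simp add: restrict0_def fxor_def fun_eq_iff)

lemma restrict0_cong: "(\<And>l. l \<in> A \<Longrightarrow> f l = g l) \<Longrightarrow> restrict0 A f = restrict0 A g"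
  by (simp add: restrict0_def fun_eq_iff)

lemma count_list_distinct: "distinct xs \<Longrightarrow> count_list xs x = (if x \<in> set xs then 1 else 0)"
  by (induction xs) auto

lemma count_list_map_triple:
  assumes "distinct Q" "s \<notin> set Q" "t \<notin> set Q"
  shows "count_list (map (\<lambda>x. {s, t, x}) Q) X = (if \<exists>x\<in>set Q. X = {s, t, x} then 1 else 0)"
proof -
  have "inj_on (\<lambda>x. {s, t, x}) (set Q)"
    using assms(2,3) by (auto intro!: inj_onI)
  then show ?thesis
    using assms(1) by (auto simp: count_list_distinct distinct_map)
qed

lemma triple_eq_iff:
  assumes "a \<noteq> b" "a \<noteq> c" "b \<noteq> c" "s \<noteq> t"
  shows "{a, b, c} = {s, t, x} \<longleftrightarrow>
    s \<in> {a, b, c} \<and> t \<in> {a, b, c} \<and> x \<in> {a, b, c} \<and> x \<noteq> s \<and> x \<noteq> t"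
proof
  assume eq: "{a, b, c} = {s, t, x}"
  then have "card {s, t, x} = 3" using assms by (simp add: eq[symmetric])
  then show "s \<in> {a, b, c} \<and> t \<in> {a, b, c} \<and> x \<in> {a, b, c} \<and> x \<noteq> s \<and> x \<noteq> t"
    unfolding eq by (auto simp: card_insert_if split: if_splits)
next
  assume "s \<in> {a, b, c} \<and> t \<in> {a, b, c} \<and> x \<in> {a, b, c} \<and> x \<noteq> s \<and> x \<noteq> t"
  then show "{a, b, c} = {s, t, x}"
    using assms by (intro card_seteq[symmetric]) (auto simp: card_insert_if)
qed

lemma bex_triple_eq_iff:
  assumes "a \<noteq> b" "a \<noteq> c" "b \<noteq> c" "{a, b, c} \<subseteq> A" "s \<noteq> t"
  shows "(\<exists>x\<in>A - {s, t}. {a, b, c} = {s, t, x}) \<longleftrightarrow> s \<in> {a, b, c} \<and> t \<in> {a, b, c}"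
  using assms by (simp add: triple_eq_iff) blast

lemma i_c_map_triple:
  assumes "distinct Q" "s \<notin> set Q" "t \<notin> set Q"
  shows "i_c n i j k (map (\<lambda>x. {s, t, x}) Q) = restrict0 ({1..n} - {i, j, k})
    (\<lambda>l. ((\<exists>x\<in>set Q. {j, k, l} = {s, t, x}) \<noteq> (\<exists>x\<in>set Q. {i, j, l} = {s, t, x}),
          (\<exists>x\<in>set Q. {i, k, l} = {s, t, x}) \<noteq> (\<exists>x\<in>set Q. {i, j, l} = {s, t, x})))"
  unfolding i_c_def restrict0_def count_list_map_triple[OF assms] by (intro ext) auto

lemma i_c_c_word:
  assumes "s \<noteq> t" "t \<in> {1..n}" "{i, j, k} \<subseteq> {1..n}" "i \<noteq> j" "i \<noteq> k" "j \<noteq> k"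
  shows "i_c n i j k (c_word n s t) = restrict0 ({1..n} - {i, j, k})
    (\<lambda>l. ((s \<in> {j, k, l} \<and> t \<in> {j, k, l}) \<noteq> (s \<in> {i, j, l} \<and> t \<in> {i, j, l}),
          (s \<in> {i, k, l} \<and> t \<in> {i, k, l}) \<noteq> (s \<in> {i, j, l} \<and> t \<in> {i, j, l})))"
proof -
  let ?Q = "filter (\<lambda>l. l \<noteq> s) ([t+1..<n+1] @ [1..<t])"
  have Q: "distinct ?Q" "s \<notin> set ?Q" "t \<notin> set ?Q" "set ?Q = {1..n} - {s, t}"
    using assms(2) by (auto simp: distinct_append)
  show ?thesis
    unfolding c_word_def i_c_map_triple[OF Q(1-3)] Q(4)
    using assms by (intro restrict0_cong) (simp add: bex_triple_eq_iff)
qed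

lemma i_c_concat_c_word:
  assumes "s \<in> {i, j, k}" "set ts \<subseteq> {1..n} - {i, j, k}" "distinct ts"
    "{i, j, k} \<subseteq> {1..n}" "i \<noteq> j" "i \<noteq> k" "j \<noteq> k"
  shows "i_c n i j k (concat (map (c_word n s) ts)) = restrict0 ({1..n} - {i, j, k})
    (\<lambda>l. (s \<noteq> j \<and> l \<in> set ts, s \<noteq> i \<and> l \<in> set ts))"
  using assms(2,3)
proof (induction ts)
  case Nil
  show ?case by (simp add: restrict0_def)
next
  case (Cons t ts)
  have "i_c n i j k (c_word n s t) =
      restrict0 ({1..n} - {i, j, k}) (\<lambda>l. (s \<noteq> j \<and> l = t, s \<noteq> i \<and> l = t))"
    using Cons.prems assms by (subst i_c_c_word) (auto intro!: restrict0_cong)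
  with Cons show ?case
    by (simp add: i_c_append restrict0_fxor) (auto simp: fxor_def intro!: restrict0_cong)
qed

lemma upt_split: "a \<le> b \<Longrightarrow> b \<le> c \<Longrightarrow> [a..<c] = [a..<b] @ [b..<c]"
  by (metis le_add_diff_inverse upt_add_eq_append)

lemma upt_split_at: "a \<le> b \<Longrightarrow> b < c \<Longrightarrow> [a..<c] = [a..<b] @ b # [b+1..<c]"
  by (subst upt_split[of a b c]) (simp_all add: upt_conv_Cons del: upt_Suc)

lemma phi_ijk_map_triple:
  assumes "{s, t, r} = {i, j, k}" "distinct (A @ r # B)"
    and "s \<notin> set (A @ r # B)" "t \<notin> set (A @ r # B)"
  shows "phi_ijk n i j k (map (\<lambda>x. {s, t, x}) (A @ r # B)) = [i_c n i j k (map (\<lambda>x. {s, t, x}) A)]"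
proof -
  have "{i, j, k} \<notin> set (map (\<lambda>x. {s, t, x}) A)" "{i, j, k} \<notin> set (map (\<lambda>x. {s, t, x}) B)"
    using assms by (auto simp flip: assms(1))
  then show ?thesis
    by (simp add: phi_ijk_append phi_ijk_eq_Nil phi_ijk_singleton assms(1)
        phi_ijk_Cons[of n i j k "{i, j, k}" "map (\<lambda>x. {s, t, x}) B"])
qed

lemma phi_ijk_c_word_ij:
  assumes "1 \<le> i" "i < j" "j < k" "k \<le> n"
  shows "phi_ijk n i j k (c_word n i j) =
    [restrict0 ({1..n} - {i, j, k}) (\<lambda>l. (j < l \<and> l < k, j < l \<and> l < k))]"
proof -
  let ?A = "[j+1..<k]"
  have split: "filter (\<lambda>l. l \<noteq> i) ([j+1..<n+1] @ [1..<j])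
      = ?A @ k # ([k+1..<n+1] @ filter (\<lambda>l. l \<noteq> i) [1..<j])"
    using assms by (subst upt_split_at[of "j+1" k]) (simp_all del: upt_Suc)
  have A: "distinct ?A" "i \<notin> set ?A" "j \<notin> set ?A"
    using assms by auto
  have "phi_ijk n i j k (c_word n i j) = [i_c n i j k (map (\<lambda>x. {i, j, x}) ?A)]"
    unfolding c_word_def split using assms
    by (subst phi_ijk_map_triple) (auto simp: distinct_append simp del: upt_Suc)
  also have "i_c n i j k (map (\<lambda>x. {i, j, x}) ?A)
      = restrict0 ({1..n} - {i, j, k}) (\<lambda>l. (j < l \<and> l < k, j < l \<and> l < k))"
    unfolding i_c_map_triple[OF A] using assms
    by (intro restrict0_cong) (auto simp: triple_eq_iff conj_disj_distribR simp del: upt_Suc)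
  finally show ?thesis .
qed

lemma phi_ijk_c_word_jk:
  assumes "1 \<le> i" "i < j" "j < k" "k \<le> n"
  shows "phi_ijk n i j k (c_word n j k) =
    [restrict0 ({1..n} - {i, j, k}) (\<lambda>l. (k < l \<or> l < i, False))]"
proof -
  let ?A = "[k+1..<n+1] @ [1..<i]"
  have split: "filter (\<lambda>l. l \<noteq> j) ([k+1..<n+1] @ [1..<k]) = ?A @ i # filter (\<lambda>l. l \<noteq> j) [i+1..<k]"
    using assms by (subst upt_split_at[of 1 i k]) (simp_all del: upt_Suc)
  have A: "distinct ?A" "j \<notin> set ?A" "k \<notin> set ?A"
    using assms by (auto simp: distinct_append)
  have "phi_ijk n i j k (c_word n j k) = [i_c n i j k (map (\<lambda>x. {j, k, x}) ?A)]"
    unfolding c_word_def split using assms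
    by (subst phi_ijk_map_triple) (auto simp: distinct_append simp del: upt_Suc)
  also have "i_c n i j k (map (\<lambda>x. {j, k, x}) ?A)
      = restrict0 ({1..n} - {i, j, k}) (\<lambda>l. (k < l \<or> l < i, False))"
    unfolding i_c_map_triple[OF A] using assms
    by (intro restrict0_cong) (auto simp: triple_eq_iff conj_disj_distribR simp del: upt_Suc)
  finally show ?thesis .
qed

lemma phi_ijk_c_word_ik:
  assumes "1 \<le> i" "i < j" "j < k" "k \<le> n"
  shows "phi_ijk n i j k (c_word n i k) =
    [restrict0 ({1..n} - {i, j, k}) (\<lambda>l. (False, k < l \<or> l < j))]"
proof -
  let ?A = "[k+1..<n+1] @ filter (\<lambda>l. l \<noteq> i) [1..<j]"
  have split: "filter (\<lambda>l. l \<noteq> i) ([k+1..<n+1] @ [1..<k]) = ?A @ j # [j+1..<k]"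
    using assms by (subst upt_split_at[of 1 j k]) (simp_all del: upt_Suc)
  have A: "distinct ?A" "i \<notin> set ?A" "k \<notin> set ?A"
    using assms by (auto simp: distinct_append)
  have "phi_ijk n i j k (c_word n i k) = [i_c n i j k (map (\<lambda>x. {i, k, x}) ?A)]"
    unfolding c_word_def split using assms
    by (subst phi_ijk_map_triple) (auto simp: distinct_append simp del: upt_Suc)
  also have "i_c n i j k (map (\<lambda>x. {i, k, x}) ?A)
      = restrict0 ({1..n} - {i, j, k}) (\<lambda>l. (False, k < l \<or> l < j))"
    unfolding i_c_map_triple[OF A] using assms
    by (intro restrict0_cong) (auto simp: triple_eq_iff conj_disj_distribR simp del: upt_Suc)
  finally show ?thesis .
qed

definition phi_conj :: "nat \<Rightarrow> nat \<Rightarrow> nat \<Rightarrow> nat set list" where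
  "phi_conj n s t = concat (map (c_word n s) (rev [s+1..<t]))"

lemma phi_gen_conj:
  "phi_gen n s t = rev (phi_conj n s t) @ c_word n s t @ c_word n s t @ phi_conj n s t"
  by (simp add: phi_gen_def phi_conj_def Let_def)

lemma i_c_conjugate: "i_c n i j k (rev P @ c @ c @ P) = (\<lambda>_. (False, False))"
  by (simp add: i_c_append fxor_cancel_left)

lemma i_c_phi_gen: "i_c n i j k (phi_gen n s t) = (\<lambda>_. (False, False))"
  unfolding phi_gen_conj by (rule i_c_conjugate)

lemma phi_ijk_conjugate:
  assumes "i \<noteq> j" "i \<noteq> k" "j \<noteq> k"
  shows "phi_ijk n i j k (rev P @ c @ c @ P) =
    rev (map ((\<oplus>) (i_c n i j k P)) (phi_ijk n i j k P)) @
    map ((\<oplus>) (i_c n i j k P)) (phi_ijk n i j k c) @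
    map ((\<oplus>) (i_c n i j k P \<oplus> i_c n i j k c)) (phi_ijk n i j k c) @
    map ((\<oplus>) (i_c n i j k P)) (phi_ijk n i j k P)"
  by (simp add: phi_ijk_append phi_ijk_rev[OF assms] i_c_append fxor_assoc fxor_cancel_left
      comp_def)

lemma mem_c_word: "X \<in> set (c_word n s t) \<Longrightarrow> s \<in> X \<and> t \<in> X"
  by (auto simp: c_word_def)

lemma phi_ijk_concat_c_word:
  "\<forall>t\<in>set ts. t \<notin> {i, j, k} \<Longrightarrow> phi_ijk n i j k (concat (map (c_word n s) ts)) = []"
  by (rule phi_ijk_eq_Nil) (auto dest: mem_c_word)

text \<open>The letters of F produced by phi_n(b_ij), phi_n(b_jk) and phi_n(b_ik) when i < j < k.\<close>

definition u_ijk :: "nat \<Rightarrow> nat \<Rightarrow> nat \<Rightarrow> nat \<Rightarrow> nat \<Rightarrow> bool \<times> bool" where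
  "u_ijk n i j k = restrict0 ({1..n} - {i, j, k}) (\<lambda>l. (i < l \<and> l < k, j < l \<and> l < k))"

definition v_ijk :: "nat \<Rightarrow> nat \<Rightarrow> nat \<Rightarrow> nat \<Rightarrow> nat \<Rightarrow> bool \<times> bool" where
  "v_ijk n i j k = restrict0 ({1..n} - {i, j, k}) (\<lambda>l. (l < i \<or> k < l, l < j \<or> k < l))"

definition z_ijk :: "nat \<Rightarrow> nat \<Rightarrow> nat \<Rightarrow> nat \<Rightarrow> nat \<Rightarrow> bool \<times> bool" where
  "z_ijk n i j k = restrict0 ({1..n} - {i, j, k}) (\<lambda>l. (l < i \<or> k < l, j < l \<and> l < k))"

lemma phi_ijk_phi_gen_ij:
  assumes "1 \<le> i" "i < j" "j < k" "k \<le> n"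
  shows "phi_ijk n i j k (phi_gen n i j) = [u_ijk n i j k, v_ijk n i j k]"
proof -
  have P: "phi_ijk n i j k (phi_conj n i j) = []"
    unfolding phi_conj_def using assms by (intro phi_ijk_concat_c_word) auto
  have \<sigma>: "i_c n i j k (phi_conj n i j) =
      restrict0 ({1..n} - {i, j, k}) (\<lambda>l. (i < l \<and> l < j, False))"
    unfolding phi_conj_def using assms by (subst i_c_concat_c_word) (auto intro!: restrict0_cong)
  have \<tau>: "i_c n i j k (c_word n i j) = restrict0 ({1..n} - {i, j, k}) (\<lambda>_. (True, True))"
    using assms by (subst i_c_c_word) (auto intro!: restrict0_cong)
  have d: "i \<noteq> j" "i \<noteq> k" "j \<noteq> k" using assms by auto
  show ?thesis
    unfolding phi_gen_conj phi_ijk_conjugate[OF d] P \<sigma> \<tau> phi_ijk_c_word_ij[OF assms]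
    using assms
    by (simp add: restrict0_fxor u_ijk_def v_ijk_def) (auto simp: fxor_def intro!: restrict0_cong)
qed

lemma phi_ijk_phi_gen_jk:
  assumes "1 \<le> i" "i < j" "j < k" "k \<le> n"
  shows "phi_ijk n i j k (phi_gen n j k) = [z_ijk n i j k, u_ijk n i j k]"
proof -
  have P: "phi_ijk n i j k (phi_conj n j k) = []"
    unfolding phi_conj_def using assms by (intro phi_ijk_concat_c_word) auto
  have \<sigma>: "i_c n i j k (phi_conj n j k) =
      restrict0 ({1..n} - {i, j, k}) (\<lambda>l. (False, j < l \<and> l < k))"
    unfolding phi_conj_def using assms by (subst i_c_concat_c_word) (auto intro!: restrict0_cong)
  have \<tau>: "i_c n i j k (c_word n j k) = restrict0 ({1..n} - {i, j, k}) (\<lambda>_. (True, False))"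
    using assms by (subst i_c_c_word) (auto intro!: restrict0_cong)
  have d: "i \<noteq> j" "i \<noteq> k" "j \<noteq> k" using assms by auto
  show ?thesis
    unfolding phi_gen_conj phi_ijk_conjugate[OF d] P \<sigma> \<tau> phi_ijk_c_word_jk[OF assms]
    using assms
    by (simp add: restrict0_fxor u_ijk_def z_ijk_def) (auto simp: fxor_def intro!: restrict0_cong)
qed

lemma phi_ijk_phi_gen_ik:
  assumes "1 \<le> i" "i < j" "j < k" "k \<le> n"
  shows "F_eq (phi_ijk n i j k (phi_gen n i k)) [v_ijk n i j k, z_ijk n i j k]"
proof -
  define P' where "P' = concat (map (c_word n i) (rev [j+1..<k]))"
  have "rev [i+1..<k] = rev [j+1..<k] @ j # rev [i+1..<j]"
    using assms by (subst upt_split_at[of "i+1" j k]) (simp_all del: upt_Suc)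
  then have conj: "phi_conj n i k = P' @ c_word n i j @ phi_conj n i j"
    by (simp add: phi_conj_def P'_def)
  have P: "phi_ijk n i j k P' = []" "phi_ijk n i j k (phi_conj n i j) = []"
    unfolding P'_def phi_conj_def using assms by (intro phi_ijk_concat_c_word; auto)+
  have \<sigma>: "i_c n i j k P' = restrict0 ({1..n} - {i, j, k}) (\<lambda>l. (j < l \<and> l < k, False))"
    "i_c n i j k (phi_conj n i j) = restrict0 ({1..n} - {i, j, k}) (\<lambda>l. (i < l \<and> l < j, False))"
    unfolding P'_def phi_conj_def using assms
    by (subst i_c_concat_c_word; auto intro!: restrict0_cong)+
  have \<tau>: "i_c n i j k (c_word n i j) = restrict0 ({1..n} - {i, j, k}) (\<lambda>_. (True, True))"
    "i_c n i j k (c_word n i k) = restrict0 ({1..n} - {i, j, k}) (\<lambda>_. (False, True))"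
    using assms by (subst i_c_c_word; auto intro!: restrict0_cong)+
  have d: "i \<noteq> j" "i \<noteq> k" "j \<noteq> k" using assms by auto
  have phi_P: "phi_ijk n i j k (phi_conj n i k) = [i_c n i j k P' \<oplus>
      restrict0 ({1..n} - {i, j, k}) (\<lambda>l. (j < l \<and> l < k, j < l \<and> l < k))]"
    unfolding conj phi_ijk_append P phi_ijk_c_word_ij[OF assms] by simp
  have i_c_P: "i_c n i j k (phi_conj n i k)
      = i_c n i j k P' \<oplus> (i_c n i j k (c_word n i j) \<oplus> i_c n i j k (phi_conj n i j))"
    unfolding conj i_c_append ..
  have "phi_ijk n i j k (phi_gen n i k) =
      [v_ijk n i j k, z_ijk n i j k] @ [v_ijk n i j k, v_ijk n i j k] @ []"
    unfolding phi_gen_conj phi_ijk_conjugate[OF d] phi_P i_c_P \<sigma> \<tau> phi_ijk_c_word_ik[OF assms]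
    using assms
    by (simp add: restrict0_fxor v_ijk_def z_ijk_def) (auto simp: fxor_def intro!: restrict0_cong)
  then show ?thesis
    using F_eq_cancel[of "[v_ijk n i j k, z_ijk n i j k]" "v_ijk n i j k" "[]"] by simp
qed

lemma phi_ijk_phi_gen_trivial:
  assumes "i \<noteq> j" "i \<noteq> k" "j \<noteq> k" "\<not> (s \<in> {i, j, k} \<and> t \<in> {i, j, k})"
  shows "F_eq (phi_ijk n i j k (phi_gen n s t)) []"
proof -
  have "phi_ijk n i j k (c_word n s t) = []"
    using assms(4) by (intro phi_ijk_eq_Nil) (auto dest: mem_c_word)
  then show ?thesis
    unfolding phi_gen_conj phi_ijk_conjugate[OF assms(1-3)] by (simp add: F_eq_rev_append_self)
qed

text \<open>Both phi_ijk \<circ> phi_n and the crossing valuation below send b_st to this word in F.\<close>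

definition pb3_word :: "nat \<Rightarrow> nat \<Rightarrow> nat \<Rightarrow> 'a \<Rightarrow> 'a \<Rightarrow> 'a \<Rightarrow> nat \<Rightarrow> nat \<Rightarrow> 'a list" where
  "pb3_word a b c u v z s t =
    (if (s, t) = (a, b) then [u, v] else if (s, t) = (a, c) then [v, z]
     else if (s, t) = (b, c) then [z, u] else [])"

lemma phi_ijk_phi_gen:
  assumes "1 \<le> i" "i < j" "j < k" "k \<le> n" "s < t"
  shows "F_eq (phi_ijk n i j k (phi_gen n s t))
    (pb3_word i j k (u_ijk n i j k) (v_ijk n i j k) (z_ijk n i j k) s t)"
proof -
  consider "(s, t) = (i, j)" | "(s, t) = (i, k)" | "(s, t) = (j, k)"
    | "\<not> (s \<in> {i, j, k} \<and> t \<in> {i, j, k})"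
    using assms by fastforce
  then show ?thesis
  proof cases
    case 1
    then show ?thesis using phi_ijk_phi_gen_ij[OF assms(1-4)] by (simp add: pb3_word_def)
  next
    case 2
    then show ?thesis using phi_ijk_phi_gen_ik[OF assms(1-4)] assms by (simp add: pb3_word_def)
  next
    case 3
    then show ?thesis using phi_ijk_phi_gen_jk[OF assms(1-4)] assms by (simp add: pb3_word_def)
  next
    case 4
    then show ?thesis using phi_ijk_phi_gen_trivial[of i j k s t n] assms by (auto simp: pb3_word_def)
  qed
qed

section \<open>Crossings among three strands\<close>

text \<open>A strand map p sends each position to the strand occupying it; \<open>swap_adj p a\<close> is p after
  the crossing of positions a and a + 1.\<close>

definition swap_adj :: "(nat \<Rightarrow> 'b) \<Rightarrow> nat \<Rightarrow> nat \<Rightarrow> 'b" where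
  "swap_adj p a = p \<circ> transpose a (Suc a)"

lemma swap_adj_apply: "swap_adj p a x = p (transpose a (Suc a) x)"
  by (simp add: swap_adj_def)

lemma swap_adj_swap_adj [simp]: "swap_adj (swap_adj p a) a = p"
  by (simp add: swap_adj_def comp_assoc)

fun braid_perm :: "(nat \<Rightarrow> 'b) \<Rightarrow> bword \<Rightarrow> nat \<Rightarrow> 'b" where
  "braid_perm p [] = p"
| "braid_perm p ((a, e) # w) = braid_perm (swap_adj p a) w"

text \<open>The label recorded for a positive crossing of positions a, a + 1 is that of the strand at
  position a + 1 before it, for a negative one that of the strand at position a: in both cases
  the strand that the positive crossing moves to position a. So a crossing followed by its
  inverse records a cancelling pair.\<close>

definition crossing_label :: "'b set \<Rightarrow> ('b \<Rightarrow> 'a) \<Rightarrow> (nat \<Rightarrow> 'b) \<Rightarrow> nat \<Rightarrow> bool \<Rightarrow> 'a list" where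
  "crossing_label Tr L p a e =
    (if p a \<in> Tr \<and> p (Suc a) \<in> Tr then [L (p (if e then Suc a else a))] else [])"

fun crossing_word :: "'b set \<Rightarrow> ('b \<Rightarrow> 'a) \<Rightarrow> (nat \<Rightarrow> 'b) \<Rightarrow> bword \<Rightarrow> 'a list" where
  "crossing_word Tr L p [] = []"
| "crossing_word Tr L p ((a, e) # w) =
    crossing_label Tr L p a e @ crossing_word Tr L (swap_adj p a) w"

lemma braid_perm_append [simp]: "braid_perm p (u @ v) = braid_perm (braid_perm p u) v"
  by (induction p u rule: braid_perm.induct) simp_all

lemma crossing_word_append [simp]:
  "crossing_word Tr L p (u @ v) = crossing_word Tr L p u @ crossing_word Tr L (braid_perm p u) v"
  by (induction Tr L p u rule: crossing_word.induct) simp_all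

lemma inj_braid_perm: "inj p \<Longrightarrow> inj (braid_perm p w)"
  by (induction p w rule: braid_perm.induct) (simp_all add: swap_adj_def inj_compose inj_transpose)

lemma crossing_label_transpose:
  "crossing_label Tr L (swap_adj p a) a (\<not> e) = crossing_label Tr L p a e"
  by (auto simp: crossing_label_def swap_adj_apply)

lemma binv_simps [simp]: "binv [] = []" "binv ((a, e) # w) = binv w @ [(a, \<not> e)]"
  by (simp_all add: binv_def)

lemma braid_perm_binv [simp]: "braid_perm (braid_perm p w) (binv w) = p"
proof (induction w arbitrary: p)
  case (Cons x w)
  obtain a e where "x = (a, e)" by fastforce
  with Cons[of "swap_adj p a"] show ?case by simp
qed simp

lemma crossing_word_binv:
  "crossing_word Tr L (braid_perm p w) (binv w) = rev (crossing_word Tr L p w)"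
proof (induction w arbitrary: p)
  case (Cons x w)
  obtain a e where x: "x = (a, e)" by fastforce
  have "rev (crossing_label Tr L p a e) = crossing_label Tr L p a e"
    by (simp add: crossing_label_def)
  then show ?case
    using Cons[of "swap_adj p a"] crossing_label_transpose[of Tr L p a e] by (simp add: x)
qed simp

lemma crossing_word_cancel:
  "braid_perm p [(a, e), (a, \<not> e)] = p"
  "F_eq (crossing_word Tr L p [(a, e), (a, \<not> e)]) []"
proof -
  show "braid_perm p [(a, e), (a, \<not> e)] = p" by simp
  have "crossing_word Tr L p [(a, e), (a, \<not> e)] =
      crossing_label Tr L p a e @ crossing_label Tr L p a e"
    using crossing_label_transpose[of Tr L p a e] by simp
  then show "F_eq (crossing_word Tr L p [(a, e), (a, \<not> e)]) []"
    using F_eq_cancel[of "[]" "L (p a)" "[]"] F_eq_cancel[of "[]" "L (p (Suc a))" "[]"]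
    by (simp add: crossing_label_def)
qed

lemma crossing_word_far_comm:
  assumes "inj p" "finite Tr" "card Tr \<le> 3" "a + 2 \<le> b"
  shows "braid_perm p [(a, True), (b, True)] = braid_perm p [(b, True), (a, True)]"
    and "crossing_word Tr L p [(a, True), (b, True)] = crossing_word Tr L p [(b, True), (a, True)]"
proof -
  show "braid_perm p [(a, True), (b, True)] = braid_perm p [(b, True), (a, True)]"
    using assms(4) by (auto simp: swap_adj_apply transpose_def fun_eq_iff)
  have "crossing_label Tr L (swap_adj p a) b True = crossing_label Tr L p b True"
    "crossing_label Tr L (swap_adj p b) a True = crossing_label Tr L p a True"
    using assms(4) by (simp_all add: crossing_label_def swap_adj_apply transpose_def)
  moreover have "crossing_label Tr L p a True = [] \<or> crossing_label Tr L p b True = []"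
    \<comment> \<open>otherwise four distinct strands would carry labels\<close>
  proof (rule ccontr)
    assume "\<not> ?thesis"
    then have "p ` {a, Suc a, b, Suc b} \<subseteq> Tr"
      by (auto simp: crossing_label_def split: if_splits)
    then have "card (p ` {a, Suc a, b, Suc b}) \<le> card Tr"
      by (rule card_mono[OF assms(2)])
    moreover have "card (p ` {a, Suc a, b, Suc b}) = card {a, Suc a, b, Suc b}"
      by (rule card_image, rule inj_on_subset[OF assms(1)]) simp
    moreover have "card {a, Suc a, b, Suc b} = 4"
      using assms(4) by simp
    ultimately show False
      using assms(3) by linarith
  qed
  ultimately show "crossing_word Tr L p [(a, True), (b, True)] =
      crossing_word Tr L p [(b, True), (a, True)]"
    by auto
qed

lemma crossing_word_braid_rel:
  "braid_perm p [(a, True), (a + 1, True), (a, True)] =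
    braid_perm p [(a + 1, True), (a, True), (a + 1, True)]"
  "F_eq (crossing_word Tr L p [(a, True), (a + 1, True), (a, True)])
        (crossing_word Tr L p [(a + 1, True), (a, True), (a + 1, True)])"
proof -
  show "braid_perm p [(a, True), (a + 1, True), (a, True)] =
      braid_perm p [(a + 1, True), (a, True), (a + 1, True)]"
    by (auto simp: swap_adj_apply transpose_def fun_eq_iff)
  let ?x = "p a" and ?y = "p (Suc a)" and ?z = "p (Suc (Suc a))"
  have lhs: "crossing_word Tr L p [(a, True), (a + 1, True), (a, True)] =
     (if ?x \<in> Tr \<and> ?y \<in> Tr then [L ?y] else []) @
     (if ?x \<in> Tr \<and> ?z \<in> Tr then [L ?z] else []) @
     (if ?y \<in> Tr \<and> ?z \<in> Tr then [L ?z] else [])"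
    by (simp add: crossing_label_def swap_adj_apply transpose_def)
  have rhs: "crossing_word Tr L p [(a + 1, True), (a, True), (a + 1, True)] =
     (if ?y \<in> Tr \<and> ?z \<in> Tr then [L ?z] else []) @
     (if ?x \<in> Tr \<and> ?z \<in> Tr then [L ?z] else []) @
     (if ?x \<in> Tr \<and> ?y \<in> Tr then [L ?y] else [])"
    by (simp add: crossing_label_def swap_adj_apply transpose_def)
  show "F_eq (crossing_word Tr L p [(a, True), (a + 1, True), (a, True)])
        (crossing_word Tr L p [(a + 1, True), (a, True), (a + 1, True)])"
  proof (cases "?x \<in> Tr \<and> ?y \<in> Tr \<and> ?z \<in> Tr")
    case True
    have "F_eq [L ?y, L ?z, L ?z] [L ?y]" "F_eq [L ?z, L ?z, L ?y] [L ?y]"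
      using F_eq_cancel[of "[L ?y]" "L ?z" "[]"] F_eq_cancel[of "[]" "L ?z" "[L ?y]"] by simp_all
    then show ?thesis
      unfolding lhs rhs using True by (auto intro: equivclp_trans equivclp_sym)
  next
    case False
    then show ?thesis unfolding lhs rhs by auto
  qed
qed

lemma crossing_word_braid_step:
  assumes "braid_step m u v" "inj p" "finite Tr" "card Tr \<le> 3"
  shows "braid_perm p u = braid_perm p v \<and>
    F_eq (crossing_word Tr L p u) (crossing_word Tr L p v)"
proof -
  have local_step: "braid_perm p (xs @ u' @ ys) = braid_perm p (xs @ v' @ ys) \<and>
      F_eq (crossing_word Tr L p (xs @ u' @ ys)) (crossing_word Tr L p (xs @ v' @ ys))"
    if "braid_perm (braid_perm p xs) u' = braid_perm (braid_perm p xs) v'"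
      "F_eq (crossing_word Tr L (braid_perm p xs) u') (crossing_word Tr L (braid_perm p xs) v')"
    for xs u' v' ys
    using that by (simp add: F_eq_append)
  from assms(1) show ?thesis
  proof cases
    case (free_red a xs e ys)
    then show ?thesis
      using local_step[of xs "[(a, e), (a, \<not> e)]" "[]" ys]
        crossing_word_cancel(2)[of Tr L "braid_perm p xs" a e] by simp
  next
    case (far_comm a b xs ys)
    note swap = crossing_word_far_comm[OF inj_braid_perm[OF assms(2)] assms(3,4) \<open>a + 2 \<le> b\<close>]
    have "F_eq (crossing_word Tr L (braid_perm p xs) [(a, True), (b, True)])
        (crossing_word Tr L (braid_perm p xs) [(b, True), (a, True)])"
      unfolding swap(2) by (rule equivclp_refl)
    with far_comm(1,2) show ?thesis
      using local_step[OF swap(1)] by simp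
  next
    case (braid_rel a xs ys)
    then show ?thesis
      using local_step[OF crossing_word_braid_rel] by simp
  qed
qed

lemma braid_trivial_crossing_word:
  assumes "braid_trivial m w" "finite Tr" "card Tr \<le> 3"
  shows "F_eq (crossing_word Tr L id w) []"
proof -
  have "equivclp (braid_step m) w []" using assms(1) by (simp add: braid_trivial_def)
  then have "F_eq (crossing_word Tr L id w) (crossing_word Tr L id [])"
  proof (induction rule: equivclp_induct)
    case (step y z)
    then have "F_eq (crossing_word Tr L id y) (crossing_word Tr L id z)"
      using crossing_word_braid_step[of m _ _ id Tr L] assms(2,3) by (auto intro: equivclp_sym)
    with step.IH show ?case by (rule equivclp_trans)
  qed simp
  then show ?thesis by simp
qed

text \<open>The word sigma_(t-1) ... sigma_q, which carries the strand at position t down to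
  position q.\<close>

definition climb :: "nat \<Rightarrow> nat \<Rightarrow> bword" where
  "climb q t = map (\<lambda>a. (a, True)) (rev [q..<t])"

lemma pb_gen_climb:
  "pb_gen s t = climb (s + 1) t @ [(s, True), (s, True)] @ binv (climb (s + 1) t)"
  by (simp add: pb_gen_def climb_def binv_def rev_map comp_def)

lemma braid_perm_climb:
  "q \<le> t \<Longrightarrow> braid_perm p (climb q t) q = p t \<and> (\<forall>x<q. braid_perm p (climb q t) x = p x)"
proof (induction t arbitrary: p)
  case (Suc t)
  show ?case
  proof (cases "q = Suc t")
    case False
    then have "q \<le> t" "climb q (Suc t) = (t, True) # climb q t"
      using Suc.prems by (simp_all add: climb_def)
    moreover have "swap_adj p t t = p (Suc t)" "\<forall>x<q. swap_adj p t x = p x"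
      using \<open>q \<le> t\<close> by (auto simp: swap_adj_apply)
    ultimately show ?thesis
      using Suc.IH[of "swap_adj p t"] by simp
  qed (simp add: climb_def)
qed (simp add: climb_def)

lemma crossing_word_climb:
  "crossing_word Tr L p (climb q t) =
    concat (map (\<lambda>x. if p x \<in> Tr \<and> p t \<in> Tr then [L (p t)] else []) (rev [q..<t]))"
proof (induction t arbitrary: p)
  case (Suc t)
  show ?case
  proof (cases "q \<le> t")
    case True
    then have "crossing_word Tr L p (climb q (Suc t))
        = crossing_label Tr L p t True @ crossing_word Tr L (swap_adj p t) (climb q t)"
      by (simp add: climb_def)
    also have "\<dots> = crossing_label Tr L p t True @
        concat (map (\<lambda>x. if p x \<in> Tr \<and> p (Suc t) \<in> Tr then [L (p (Suc t))] else [])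
          (rev [q..<t]))"
      unfolding Suc.IH by (auto simp: swap_adj_apply intro!: arg_cong[where f = concat] map_cong)
    finally show ?thesis
      using True by (simp add: crossing_label_def)
  qed (simp add: climb_def)
qed (simp add: climb_def)

lemma braid_perm_pb_gen: "braid_perm p (pb_gen s t) = p"
  by (simp add: pb_gen_climb)

lemma concat_map_singleton_if:
  "concat (map (\<lambda>x. if P x then [y] else []) xs) = replicate (length (filter P xs)) y"
  by (induction xs) auto

lemma crossing_word_pb_gen:
  assumes "s < t"
  shows "crossing_word Tr L id (pb_gen s t) =
    replicate (if t \<in> Tr then card (Tr \<inter> {s<..<t}) else 0) (L t) @
    (if s \<in> Tr \<and> t \<in> Tr then [L t, L s] else []) @
    replicate (if t \<in> Tr then card (Tr \<inter> {s<..<t}) else 0) (L t)"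
proof -
  let ?R = "climb (Suc s) t"
  let ?X = "concat (map (\<lambda>x. if x \<in> Tr \<and> t \<in> Tr then [L t] else []) (rev [s+1..<t]))"
  have "braid_perm id ?R s = s" "braid_perm id ?R (Suc s) = t"
    using braid_perm_climb[of "Suc s" t id] assms by auto
  then have "crossing_label Tr L (braid_perm id ?R) s True = (if s \<in> Tr \<and> t \<in> Tr then [L t] else [])"
    "crossing_label Tr L (swap_adj (braid_perm id ?R) s) s True =
      (if s \<in> Tr \<and> t \<in> Tr then [L s] else [])"
    by (auto simp: crossing_label_def swap_adj_apply)
  then have "crossing_word Tr L id (pb_gen s t) =
      ?X @ (if s \<in> Tr \<and> t \<in> Tr then [L t, L s] else []) @ rev ?X"
    using crossing_word_binv[of Tr L id ?R] crossing_word_climb[of Tr L id "Suc s" t]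
    by (simp add: pb_gen_climb cong: if_cong)
  moreover have "length (filter (\<lambda>x. x \<in> Tr \<and> t \<in> Tr) (rev [s+1..<t])) =
      (if t \<in> Tr then card (Tr \<inter> {s<..<t}) else 0)"
    by (simp add: distinct_length_filter atLeastSucLessThan_greaterThanLessThan Int_commute)
  ultimately show ?thesis
    unfolding concat_map_singleton_if by simp
qed

lemma crossing_word_pb_gen_pb3:
  assumes "a < b" "b < c" "s < t" "L a = v" "L b = u" "L c = z"
  shows "F_eq (crossing_word {a, b, c} L id (pb_gen s t)) (pb3_word a b c u v z s t)"
proof -
  consider "(s, t) = (a, b)" | "(s, t) = (a, c)" | "(s, t) = (b, c)"
    | "\<not> (s \<in> {a, b, c} \<and> t \<in> {a, b, c})"
    using assms(1-3) by fastforce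
  then show ?thesis
  proof cases
    case 1
    then have "{a, b, c} \<inter> {s<..<t} = {}" using assms by auto
    with 1 show ?thesis using assms by (simp add: crossing_word_pb_gen pb3_word_def)
  next
    case 2
    then have "{a, b, c} \<inter> {s<..<t} = {b}" using assms by auto
    with 2 have "crossing_word {a, b, c} L id (pb_gen s t) = [] @ [z, z] @ [v, z]"
      using assms by (simp add: crossing_word_pb_gen)
    also have "F_eq \<dots> [v, z]" using F_eq_cancel[of "[]" z "[v, z]"] by simp
    finally show ?thesis using 2 assms by (simp add: pb3_word_def)
  next
    case 3
    then have "{a, b, c} \<inter> {s<..<t} = {}" using assms by auto
    with 3 show ?thesis using assms by (simp add: crossing_word_pb_gen pb3_word_def)
  next
    case 4
    then have "pb3_word a b c u v z s t = []" using assms by (auto simp: pb3_word_def)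
    moreover obtain m where
      "crossing_word {a, b, c} L id (pb_gen s t) = replicate m (L t) @ replicate m (L t)"
      unfolding crossing_word_pb_gen[OF assms(3)] if_not_P[OF 4] by auto
    moreover have "F_eq (replicate m (L t) @ replicate m (L t)) []"
      using F_eq_append_rev_self[of "replicate m (L t)"] by simp
    ultimately show ?thesis by simp
  qed
qed

section \<open>Forgetting a strand\<close>

text \<open>An inverse generator is replaced by the reversed word, which is its inverse in F.\<close>

definition subst_pword :: "(nat \<Rightarrow> nat \<Rightarrow> 'a list) \<Rightarrow> pword \<Rightarrow> 'a list" where
  "subst_pword f w = concat (map (\<lambda>((s, t), e). if e then f s t else rev (f s t)) w)"

lemma subst_pword_simps [simp]:
  "subst_pword f [] = []"
  "subst_pword f (((s, t), e) # w) = (if e then f s t else rev (f s t)) @ subst_pword f w"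
  by (simp_all add: subst_pword_def)

lemma phi_n_eq_subst_pword: "phi_n n w = subst_pword (phi_gen n) w"
  by (simp add: phi_n_def subst_pword_def)

lemma phi_ijk_subst_pword:
  assumes "i \<noteq> j" "i \<noteq> k" "j \<noteq> k" "\<And>s t. i_c n i j k (g s t) = (\<lambda>_. (False, False))"
  shows "phi_ijk n i j k (subst_pword g w) = subst_pword (\<lambda>s t. phi_ijk n i j k (g s t)) w"
proof (induction w)
  case (Cons x w)
  obtain s t e where "x = ((s, t), e)" by (metis prod.collapse)
  with Cons show ?case
    by (simp add: phi_ijk_append phi_ijk_rev[OF assms(1-3)] assms(4))
qed simp

lemma subst_pword_F_eq:
  "(\<And>s t e. ((s, t), e) \<in> set w \<Longrightarrow> F_eq (f s t) (g s t)) \<Longrightarrow>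
    F_eq (subst_pword f w) (subst_pword g w)"
proof (induction w)
  case (Cons x w)
  obtain s t e where x: "x = ((s, t), e)" by (metis prod.collapse)
  have "F_eq (f s t) (g s t)" using Cons.prems[of s t e] by (simp add: x)
  moreover have "F_eq (subst_pword f w) (subst_pword g w)"
    using Cons.prems by (intro Cons.IH) auto
  ultimately show ?case by (simp add: x F_eq_append F_eq_rev)
qed simp

lemma subst_pword_delete_strand:
  "subst_pword f (delete_strand m w) =
    subst_pword (\<lambda>s t. if m = s \<or> m = t then [] else f (relabel m s) (relabel m t)) w"
  by (induction w) (auto simp: delete_strand_def subst_pword_def)

lemma crossing_word_pb_expand:
  "crossing_word Tr L p (pb_expand v) = subst_pword (\<lambda>s t. crossing_word Tr L p (pb_gen s t)) v"
proof (induction v)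
  case Nil
  show ?case by (simp add: pb_expand_def)
next
  case (Cons x v)
  obtain s t e where x: "x = ((s, t), e)" by (metis prod.collapse)
  have "pb_expand (x # v) = (if e then pb_gen s t else binv (pb_gen s t)) @ pb_expand v"
    by (simp add: pb_expand_def x)
  moreover have "braid_perm p (binv (pb_gen s t)) = p"
    using braid_perm_binv[of p "pb_gen s t"] by (simp add: braid_perm_pb_gen)
  moreover have
    "crossing_word Tr L p (binv (pb_gen s t)) = rev (crossing_word Tr L p (pb_gen s t))"
    using crossing_word_binv[of Tr L p "pb_gen s t"] by (simp add: braid_perm_pb_gen)
  ultimately show ?case
    using Cons by (simp add: x braid_perm_pb_gen)
qed

lemma relabel_eq_iff: "x \<noteq> m \<Longrightarrow> y \<noteq> m \<Longrightarrow> relabel m x = relabel m y \<longleftrightarrow> x = y"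
  by (auto simp: relabel_def)

lemma relabel_less_iff: "x \<noteq> m \<Longrightarrow> y \<noteq> m \<Longrightarrow> relabel m x < relabel m y \<longleftrightarrow> x < y"
  by (auto simp: relabel_def)

lemma pb3_word_relabel:
  assumes "m \<notin> {a, b, c, s, t}"
  shows "pb3_word (relabel m a) (relabel m b) (relabel m c) u v z (relabel m s) (relabel m t) =
    pb3_word a b c u v z s t"
  using assms by (simp add: pb3_word_def relabel_eq_iff)

lemma card_triple_le: "card {a, b, c} \<le> 3"
  by (simp add: card_insert_if)

lemma phi_gen_crossing_valuation:
  assumes "1 \<le> i" "i < j" "j < k" "k \<le> n" "m \<notin> {i, j, k}"
  obtains Tr :: "nat set" and L where "finite Tr" "card Tr \<le> 3"
    "\<And>s t. s < t \<Longrightarrow> F_eq (phi_ijk n i j k (phi_gen n s t))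
      (if m = s \<or> m = t then [] else crossing_word Tr L id (pb_gen (relabel m s) (relabel m t)))"
proof -
  let ?r = "relabel m"
  let ?u = "u_ijk n i j k" and ?v = "v_ijk n i j k" and ?z = "z_ijk n i j k"
  let ?Tr = "{?r i, ?r j, ?r k}"
  let ?L = "\<lambda>x. if x = ?r i then ?v else if x = ?r j then ?u else ?z"
  have "F_eq (phi_ijk n i j k (phi_gen n s t))
      (if m = s \<or> m = t then [] else crossing_word ?Tr ?L id (pb_gen (?r s) (?r t)))"
    if "s < t" for s t
  proof -
    have "F_eq (phi_ijk n i j k (phi_gen n s t)) (pb3_word i j k ?u ?v ?z s t)"
      using phi_ijk_phi_gen[OF assms(1-4) that] .
    also have "F_eq \<dots> (if m = s \<or> m = t then [] else crossing_word ?Tr ?L id (pb_gen (?r s) (?r t)))"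
    proof (cases "m = s \<or> m = t")
      case True
      then have "pb3_word i j k ?u ?v ?z s t = []" using assms(5) by (auto simp: pb3_word_def)
      with True show ?thesis by simp
    next
      case False
      have "F_eq (crossing_word ?Tr ?L id (pb_gen (?r s) (?r t)))
          (pb3_word (?r i) (?r j) (?r k) ?u ?v ?z (?r s) (?r t))"
        by (rule crossing_word_pb_gen_pb3)
          (use assms False that in \<open>simp_all add: relabel_less_iff relabel_eq_iff\<close>)
      moreover have "pb3_word (?r i) (?r j) (?r k) ?u ?v ?z (?r s) (?r t) = pb3_word i j k ?u ?v ?z s t"
        using False assms(5) by (simp add: pb3_word_relabel)
      ultimately show ?thesis
        using False by (simp add: equivclp_sym)
    qed
    finally show ?thesis .
  qed
  from that[of ?Tr ?L, OF _ card_triple_le this] show thesis by simp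
qed

lemma F_trivial_phi_ijk_phi_n_sorted:
  assumes "1 \<le> i" "i < j" "j < k" "k \<le> n" "m \<notin> {i, j, k}" "pb_word n w"
    and "braid_trivial (n - 1) (pb_expand (delete_strand m w))"
  shows "F_trivial (phi_ijk n i j k (phi_n n w))"
proof -
  obtain Tr :: "nat set" and L where Tr: "finite Tr" "card Tr \<le> 3" and gen: "\<And>s t. s < t \<Longrightarrow>
      F_eq (phi_ijk n i j k (phi_gen n s t))
        (if m = s \<or> m = t then [] else crossing_word Tr L id (pb_gen (relabel m s) (relabel m t)))"
    using phi_gen_crossing_valuation[OF assms(1-5)] by blast
  let ?cw = "\<lambda>s t. crossing_word Tr L id (pb_gen s t)"
  have phi: "phi_ijk n i j k (phi_n n w) = subst_pword (\<lambda>s t. phi_ijk n i j k (phi_gen n s t)) w"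
    unfolding phi_n_eq_subst_pword using assms(2,3)
    by (intro phi_ijk_subst_pword) (simp_all add: i_c_phi_gen)
  have forget: "subst_pword (\<lambda>s t. if m = s \<or> m = t then [] else ?cw (relabel m s) (relabel m t)) w
      = crossing_word Tr L id (pb_expand (delete_strand m w))"
    by (simp add: subst_pword_delete_strand crossing_word_pb_expand)
  have "F_eq (subst_pword (\<lambda>s t. phi_ijk n i j k (phi_gen n s t)) w)
      (subst_pword (\<lambda>s t. if m = s \<or> m = t then [] else ?cw (relabel m s) (relabel m t)) w)"
    using assms(6) by (intro subst_pword_F_eq gen) (auto simp: pb_word_def)
  also have "F_eq \<dots> []"
    unfolding forget using assms(7) Tr by (rule braid_trivial_crossing_word)
  finally show ?thesis by (simp add: F_trivial_def phi)
qed

section \<open>Permuting i, j, k\<close>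

lemma F_trivial_map: "F_trivial w \<Longrightarrow> F_trivial (map h w)"
  using F_eq_map[of w "[]" h] by (simp add: F_trivial_def)

lemma i_c_swap12: "i_c n j i k g = (\<lambda>l. prod.swap (i_c n i j k g l))"
proof
  fix l
  have "{j, i, l} = {i, j, l}" "{j, i, k} = {i, j, k}" by blast+
  then show "i_c n j i k g l = prod.swap (i_c n i j k g l)"
    unfolding i_c_def by simp
qed

lemma i_c_swap23:
  "i_c n i k j g = (\<lambda>l. (fst (i_c n i j k g l) \<noteq> snd (i_c n i j k g l), snd (i_c n i j k g l)))"
proof
  fix l
  have "{k, j, l} = {j, k, l}" "{i, k, j} = {i, j, k}" by blast+
  then show "i_c n i k j g l = (fst (i_c n i j k g l) \<noteq> snd (i_c n i j k g l), snd (i_c n i j k g l))"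
    unfolding i_c_def by (simp, argo)
qed

lemma phi_ijk_swap12: "phi_ijk n j i k g = map (\<lambda>f l. prod.swap (f l)) (phi_ijk n i j k g)"
proof -
  have "{j, i, k} = {i, j, k}" by blast
  then show ?thesis by (simp add: phi_ijk_def i_c_swap12[where i = i and j = j])
qed

lemma phi_ijk_swap23:
  "phi_ijk n i k j g = map (\<lambda>f l. (fst (f l) \<noteq> snd (f l), snd (f l))) (phi_ijk n i j k g)"
proof -
  have "{i, k, j} = {i, j, k}" by blast
  then show ?thesis by (simp add: phi_ijk_def i_c_swap23[where j = j and k = k])
qed

lemma F_trivial_phi_ijk_permute:
  assumes "F_trivial (phi_ijk n a b c g)" "{i, j, k} = {a, b, c}" "i \<noteq> j" "i \<noteq> k" "j \<noteq> k"
  shows "F_trivial (phi_ijk n i j k g)"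
proof -
  have swap12: "F_trivial (phi_ijk n y x z g)" if "F_trivial (phi_ijk n x y z g)" for x y z
    using F_trivial_map[OF that] by (simp add: phi_ijk_swap12[where i = x and j = y])
  have swap23: "F_trivial (phi_ijk n x z y g)" if "F_trivial (phi_ijk n x y z g)" for x y z
    using F_trivial_map[OF that] by (simp add: phi_ijk_swap23[where j = y and k = z])
  have bac: "F_trivial (phi_ijk n b a c g)" using assms(1) by (rule swap12)
  have acb: "F_trivial (phi_ijk n a c b g)" using assms(1) by (rule swap23)
  have bca: "F_trivial (phi_ijk n b c a g)" using bac by (rule swap23)
  have cab: "F_trivial (phi_ijk n c a b g)" using acb by (rule swap12)
  have cba: "F_trivial (phi_ijk n c b a g)" using cab by (rule swap23)
  have "i \<in> {a, b, c}" "j \<in> {a, b, c}" "k \<in> {a, b, c}"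
    using assms(2) by auto
  then show ?thesis
    using assms(1,3-5) bac acb bca cab cba by auto
qed

lemma obtain_sorted_triple:
  fixes i j k :: nat
  assumes "i \<noteq> j" "i \<noteq> k" "j \<noteq> k"
  obtains a b c where "a < b" "b < c" "{a, b, c} = {i, j, k}"
proof -
  obtain l where l: "sorted_wrt (<) l" "set l = {i, j, k}" "length l = card {i, j, k}"
    using finite_set_strict_sorted[of "{i, j, k}"] by blast
  then obtain a b c where "l = [a, b, c]"
    using assms by (auto simp: numeral_3_eq_3 length_Suc_conv)
  with l that show ?thesis by auto
qed

lemma obtain_other_strand:
  fixes n i j k :: nat
  assumes "4 \<le> n"
  obtains m where "m \<in> {1..n}" "m \<notin> {i, j, k}"
proof -
  have "\<not> {1..n} \<subseteq> {i, j, k}"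
    using assms card_mono[of "{i, j, k}" "{1..n}"] card_triple_le[of i j k] by auto
  with that show ?thesis by blast
qed

theorem mainTheorem2:
  fixes n i j k :: nat and w :: pword
  assumes "n \<ge> 4"
    and "brunnian n w"
    and "i \<in> {1..n}" and "j \<in> {1..n}" and "k \<in> {1..n}"
    and "i \<noteq> j" and "i \<noteq> k" and "j \<noteq> k"
  shows "F_trivial (phi_ijk n i j k (phi_n n w))"
proof -
  obtain a b c where abc: "a < b" "b < c" "{a, b, c} = {i, j, k}"
    using obtain_sorted_triple assms(6-8) by metis
  obtain m where m: "m \<in> {1..n}" "m \<notin> {i, j, k}"
    using obtain_other_strand assms(1) by metis
  have "a \<in> {i, j, k}" "c \<in> {i, j, k}"
    using abc(3) by blast+
  then have "1 \<le> a" "c \<le> n"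
    using assms(3-5) by auto
  moreover have "pb_word n w" "braid_trivial (n - 1) (pb_expand (delete_strand m w))"
    using assms(2) m(1) by (simp_all add: brunnian_def)
  ultimately have "F_trivial (phi_ijk n a b c (phi_n n w))"
    using abc m(2) by (intro F_trivial_phi_ijk_phi_n_sorted) auto
  then show ?thesis
    using abc(3) assms(6-8) by (rule F_trivial_phi_ijk_permute[OF _ sym])
qed

end
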